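(* For any $U\in(0,1]$, let $L=\sqrt{\frac{C}{C/U^2+(g(U)-1)/\epsilon^2}}$. Then $L\le\min\{\lambda^*,U\}$.
   Context: $\epsilon\in(0,1)$, $K\ge1$, $C>K$, $g:[0,1]\to[1,K]$ non-decreasing, $f(\lambda)=\frac{C}{\lambda^2}+\frac{g(\lambda)}{\epsilon^2}$, and $\lambda^*\in(0,1]$ a minimizer of $f$ over $[0,1]$. *)

theory Defs
  imports Complex_Main
begin

definition fobj :: "real \<Rightarrow> real \<Rightarrow> (real \<Rightarrow> real) \<Rightarrow> real \<Rightarrow> real" where
  "fobj C eps g lam = C / lam\<^sup>2 + g lam / eps\<^sup>2"

end

theory Submission
  imports Defs
begin

text \<open>Write D for the denominator C / U^2 + (g U - 1) / eps^2. Since g U \<ge> 1 we have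
  D \<ge> C / U^2, so C / D \<le> U^2. Minimality of lstar together with g lstar \<ge> 1 gives
  C / lstar^2 + 1 / eps^2 \<le> f lstar \<le> f U = D + 1 / eps^2, so C / D \<le> lstar^2 as well.\<close>

lemma sqrt_div_le_of_div_square_le:
  fixes C D a :: real
  assumes "0 < C" "0 < a" "C / a\<^sup>2 \<le> D"
  shows "sqrt (C / D) \<le> a"
proof -
  have Ca_pos: "0 < C / a\<^sup>2" using assms by simp
  with assms(3) have "0 < D" by linarith
  with Ca_pos have "0 < D * (C / a\<^sup>2)" by (rule mult_pos_pos[rotated])
  then have "C / D \<le> C / (C / a\<^sup>2)"
    using assms by (intro divide_left_mono) auto
  also have "\<dots> = a\<^sup>2" using assms by simp
  finally show ?thesis using \<open>0 < a\<close> by (intro real_le_lsqrt) auto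
qed

lemma fobj_le_imp_div_square_le:
  assumes "fobj C eps g l \<le> fobj C eps g u" and "1 \<le> g l"
  shows "C / l\<^sup>2 \<le> C / u\<^sup>2 + (g u - 1) / eps\<^sup>2"
proof -
  have "1 / eps\<^sup>2 \<le> g l / eps\<^sup>2" using \<open>1 \<le> g l\<close> by (simp add: divide_right_mono)
  then show ?thesis using assms(1) by (simp add: fobj_def diff_divide_distrib)
qed

theorem lemmaB4:
  fixes eps K C lstar U :: real and g :: "real \<Rightarrow> real"
  assumes eps: "0 < eps" "eps < 1"
    and K: "1 \<le> K"
    and CK: "C > K"
    and g_range: "\<forall>x\<in>{0..1}. 1 \<le> g x \<and> g x \<le> K"
    and g_mono: "mono_on {0..1} g"
    and lstar: "lstar \<in> {0<..1}"
    and lstar_min: "\<forall>lam\<in>{0<..1}. fobj C eps g lstar \<le> fobj C eps g lam"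
    and U: "U \<in> {0<..1}"
  shows "sqrt (C / (C / U\<^sup>2 + (g U - 1) / eps\<^sup>2)) \<le> min lstar U"
proof -
  let ?D = "C / U\<^sup>2 + (g U - 1) / eps\<^sup>2"
  have C_pos: "0 < C" using CK K by linarith
  have "1 \<le> g U" "1 \<le> g lstar" using g_range U lstar by auto
  then have "C / U\<^sup>2 \<le> ?D" by simp
  then have below_U: "sqrt (C / ?D) \<le> U"
    using C_pos U by (intro sqrt_div_le_of_div_square_le) auto
  have "C / lstar\<^sup>2 \<le> ?D"
    using lstar_min U \<open>1 \<le> g lstar\<close> by (intro fobj_le_imp_div_square_le) auto
  then have "sqrt (C / ?D) \<le> lstar"
    using C_pos lstar by (intro sqrt_div_le_of_div_square_le) auto
  with below_U show ?thesis by simp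
qed

end
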